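(* Assume A1, A2 and A3(iii) with constant $K<1$. Then for every $\alpha\in(0,-\log_\rho K)$, $$\rho^{\alpha n}\,\mathbb E\bigl(|\bm Z_n|^{-1}\bigr)\to 0\quad\text{as } n\to\infty.$$
   Context: Fix an integer $l\ge 2$, let $\mathbb N=\{0,1,2,\dots\}$, and for $\bm x\in\mathbb R^l$ let $|\bm x|=\sum_{i=1}^l|x_i|$. $(\bm Z_n)_{n\ge0}$ is an $l$-type Galton–Watson process started from a canonical basis vector, defined by $\bm Z_n=\sum_{j=1}^l\sum_{i=1}^{Z_{n-1,j}}\bm Y^{(j)}_{n-1,i}$ with mutually independent offspring vectors, $\bm Y^{(j)}_{n-1,i}$ having law $p_j$ on $\mathbb N^l$; $\bm Y^{(i)}$ denotes a random vector with law $p_i$. The mean matrix $M$ has entries $M_{ik}=\mathbb E(Y^{(i)}_k)$. Assumption A1: for every $j$, $p_j(\bm 0)=0$ and $\sum_{k=1}^l p_j(\bm e_k)<1$. Assumption A2: $M$ is positively regular and its largest eigenvalue $\rho$ satisfies $\rho>1$. Assumption A3(iii): there is a constant $K$ with $\mathbb E(|\bm Y^{(i)}|^{-1})\le K$ for all $i\in\{1,\dots,l\}$. *)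

theory Defs
  imports "HOL-Analysis.Analysis" "HOL-Probability.Probability"
begin

definition vnorm :: "nat ^ 'l::finite \<Rightarrow> nat" where
  "vnorm x = (\<Sum>i\<in>UNIV. x $ i)"

fun iid_sum :: "(nat ^ 'l::finite) pmf \<Rightarrow> nat \<Rightarrow> (nat ^ 'l) pmf" where
  "iid_sum q 0 = return_pmf 0"
| "iid_sum q (Suc k) = bind_pmf q (\<lambda>y. map_pmf (\<lambda>s. y + s) (iid_sum q k))"

text \<open>One generation: given Z_{n-1} = z, law of sum over j of sum_{i<z_j} Y^(j)_i,
  all offspring vectors independent.\<close>
definition gw_step :: "('l::finite \<Rightarrow> (nat ^ 'l) pmf) \<Rightarrow> nat ^ 'l \<Rightarrow> (nat ^ 'l) pmf" where
  "gw_step p z = map_pmf (\<lambda>f. \<Sum>j\<in>UNIV. f j) (Pi_pmf UNIV 0 (\<lambda>j. iid_sum (p j) (z $ j)))"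

fun gw :: "('l::finite \<Rightarrow> (nat ^ 'l) pmf) \<Rightarrow> 'l \<Rightarrow> nat \<Rightarrow> (nat ^ 'l) pmf" where
  "gw p i 0 = return_pmf (axis i 1)"
| "gw p i (Suc n) = bind_pmf (gw p i n) (gw_step p)"

definition mean_matrix :: "('l::finite \<Rightarrow> (nat ^ 'l) pmf) \<Rightarrow> real ^ 'l ^ 'l" where
  "mean_matrix p = (\<chi> i k. measure_pmf.expectation (p i) (\<lambda>y. real (y $ k)))"

fun mat_pow :: "real ^ 'n::finite ^ 'n \<Rightarrow> nat \<Rightarrow> real ^ 'n ^ 'n" where
  "mat_pow M 0 = mat 1"
| "mat_pow M (Suc n) = M ** mat_pow M n"

definition positively_regular :: "real ^ 'n::finite ^ 'n \<Rightarrow> bool" where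
  "positively_regular M \<longleftrightarrow> (\<forall>i j. M $ i $ j \<ge> 0) \<and> (\<exists>m>0. \<forall>i j. mat_pow M m $ i $ j > 0)"

definition largest_eigenvalue :: "real ^ 'n::finite ^ 'n \<Rightarrow> real \<Rightarrow> bool" where
  "largest_eigenvalue M r \<longleftrightarrow>
     (\<exists>v. v \<noteq> 0 \<and> M *v v = r *\<^sub>R v) \<and>
     (\<forall>\<mu> v. v \<noteq> 0 \<and> M *v v = \<mu> *\<^sub>R v \<longrightarrow> \<mu> \<le> r)"

end

theory Submission
  imports Defs
begin

text \<open>Call a law q on N^l K-bounded at level m (inv_moment_bounded K q m) if
  |X| \<ge> m almost surely and m E(1/|X|) \<le> K. By (m + k)^2/(a + b) \<le> m^2/a + k^2/b, independent
  sums of laws that are K-bounded at levels m and k are K-bounded at level m + k. Given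
  Z_n = z, the next generation is an independent sum of |z| offspring vectors, each
  K-bounded at level 1, so E(1/|Z_(n+1)| | Z_n) \<le> K/|Z_n| and hence E(1/|Z_n|) \<le> K^n.
  Finally \<rho>^\<alpha> K < 1 exactly when \<alpha> < -log_\<rho> K.\<close>

lemma integrable_measure_pmf_bounded:
  fixes f :: "'a \<Rightarrow> real"
  assumes "\<And>x. \<bar>f x\<bar> \<le> B"
  shows "integrable (measure_pmf M) f"
  by (rule measure_pmf.integrable_const_bound[where B=B]) (auto simp: assms)

lemma abs_expectation_pmf_le:
  fixes f :: "'a \<Rightarrow> real"
  assumes "\<And>x. \<bar>f x\<bar> \<le> B"
  shows "\<bar>measure_pmf.expectation M f\<bar> \<le> B"
proof -
  have "\<bar>measure_pmf.expectation M f\<bar> \<le> measure_pmf.expectation M (\<lambda>x. \<bar>f x\<bar>)"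
    by (rule integral_abs_bound)
  also have "\<dots> \<le> B"
    using assms
    by (intro measure_pmf.integral_le_const integrable_measure_pmf_bounded[where B=B]) auto
  finally show ?thesis .
qed

lemma expectation_pmf_mono:
  fixes f g :: "'a \<Rightarrow> real"
  assumes "\<And>x. \<bar>f x\<bar> \<le> B" "\<And>x. \<bar>g x\<bar> \<le> C" "\<And>x. x \<in> set_pmf M \<Longrightarrow> f x \<le> g x"
  shows "measure_pmf.expectation M f \<le> measure_pmf.expectation M g"
  using assms
  by (intro integral_mono_AE integrable_measure_pmf_bounded) (auto simp: AE_measure_pmf_iff)

lemma expectation_bind_pmf:
  fixes f :: "'b \<Rightarrow> real"
  assumes "\<And>y. \<bar>f y\<bar> \<le> B"
  shows "measure_pmf.expectation (bind_pmf M N) f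
           = measure_pmf.expectation M (\<lambda>x. measure_pmf.expectation (N x) f)"
  unfolding measure_pmf_bind
  by (rule integral_bind[where K="count_space UNIV" and B=B and B'=1])
     (auto simp: assms measure_pmf.emeasure_space_1 measure_pmf_in_subprob_algebra)

lemma sum_sq_div_sum_le:
  fixes m k a b :: nat
  assumes "m \<le> a" "k \<le> b"
  shows "(real m + real k)\<^sup>2 / (real a + real b) \<le> (real m)\<^sup>2 / real a + (real k)\<^sup>2 / real b"
proof (cases "a = 0 \<or> b = 0")
  case True
  then show ?thesis using assms by auto
next
  case False
  have "(real m + real k)\<^sup>2 * (real a * real b)
          \<le> ((real m)\<^sup>2 * real b + (real k)\<^sup>2 * real a) * (real a + real b)"
    using zero_le_power2[of "real m * real b - real k * real a"]
    by (simp add: power2_eq_square algebra_simps)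
  with False show ?thesis by (simp add: field_simps)
qed

definition inv_vnorm :: "nat ^ 'l::finite \<Rightarrow> real" where
  "inv_vnorm z = 1 / real (vnorm z)"

lemma inv_vnorm_nonneg: "0 \<le> inv_vnorm z"
  by (simp add: inv_vnorm_def)

lemma abs_inv_vnorm_le_1: "\<bar>inv_vnorm z\<bar> \<le> 1"
  by (cases "vnorm z = 0") (auto simp: inv_vnorm_def)

lemma vnorm_add: "vnorm (x + y) = vnorm x + vnorm y"
  by (simp add: vnorm_def sum.distrib)

lemma vnorm_eq_0_iff: "vnorm x = 0 \<longleftrightarrow> x = 0"
  by (simp add: vnorm_def vec_eq_iff)

lemma vnorm_axis: "vnorm (axis i c) = c"
  by (simp add: vnorm_def axis_def)

definition add_pmf :: "'a::plus pmf \<Rightarrow> 'a pmf \<Rightarrow> 'a pmf" where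
  "add_pmf q1 q2 = bind_pmf q1 (\<lambda>x. map_pmf (\<lambda>y. x + y) q2)"

definition inv_moment_bounded :: "real \<Rightarrow> (nat ^ 'l::finite) pmf \<Rightarrow> nat \<Rightarrow> bool" where
  "inv_moment_bounded K q m \<longleftrightarrow>
     (\<forall>x\<in>set_pmf q. m \<le> vnorm x) \<and> real m * measure_pmf.expectation q inv_vnorm \<le> K"

lemma expectation_inv_vnorm_nonneg: "0 \<le> measure_pmf.expectation q inv_vnorm"
  by (simp add: integral_nonneg_AE inv_vnorm_nonneg)

lemma expectation_inv_vnorm_le_1: "measure_pmf.expectation q inv_vnorm \<le> 1"
  using abs_expectation_pmf_le[of inv_vnorm 1 q, OF abs_inv_vnorm_le_1] by (simp add: abs_le_iff)

lemma inv_moment_bounded_add_pmf: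
  assumes K: "0 \<le> K"
    and q1: "inv_moment_bounded K q1 m" and q2: "inv_moment_bounded K q2 k"
  shows "inv_moment_bounded K (add_pmf q1 q2) (m + k)"
proof -
  let ?E = "measure_pmf.expectation" and ?g = "inv_vnorm :: nat ^ 'a \<Rightarrow> real"
  define s where "s = real m + real k"
  have supp1: "\<And>x. x \<in> set_pmf q1 \<Longrightarrow> m \<le> vnorm x" and E1: "real m * ?E q1 ?g \<le> K"
    using q1 by (auto simp: inv_moment_bounded_def)
  have supp2: "\<And>y. y \<in> set_pmf q2 \<Longrightarrow> k \<le> vnorm y" and E2: "real k * ?E q2 ?g \<le> K"
    using q2 by (auto simp: inv_moment_bounded_def)
  have lin: "?E q (\<lambda>x. ?g x * a + c) = ?E q ?g * a + c" for q :: "(nat ^ 'a) pmf" and a c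
    using integrable_measure_pmf_bounded[of inv_vnorm 1 q, OF abs_inv_vnorm_le_1] by simp
  have bound: "\<bar>?g x * (real m)\<^sup>2 + ?E q2 ?g * (real k)\<^sup>2\<bar> \<le> (real m)\<^sup>2 + (real k)\<^sup>2" for x
    using expectation_inv_vnorm_nonneg[of q2] expectation_inv_vnorm_le_1[of q2]
      inv_vnorm_nonneg[of x] abs_inv_vnorm_le_1[of x]
    by (intro abs_triangle_ineq[THEN order_trans] add_mono)
       (auto simp: abs_mult intro: mult_left_le_one_le)
  have inner: "?E q2 (\<lambda>y. ?g (x + y)) * s\<^sup>2 \<le> ?g x * (real m)\<^sup>2 + ?E q2 ?g * (real k)\<^sup>2"
    if x: "x \<in> set_pmf q1" for x
  proof -
    have "?E q2 (\<lambda>y. ?g (x + y)) * s\<^sup>2 = ?E q2 (\<lambda>y. ?g (x + y) * s\<^sup>2)"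
      by simp
    also have "\<dots> \<le> ?E q2 (\<lambda>y. ?g y * (real k)\<^sup>2 + ?g x * (real m)\<^sup>2)"
    proof (rule expectation_pmf_mono)
      show "\<bar>?g (x + y) * s\<^sup>2\<bar> \<le> s\<^sup>2" for y
        using abs_inv_vnorm_le_1[of "x + y"] by (simp add: abs_mult mult_left_le_one_le)
      show "\<bar>?g y * (real k)\<^sup>2 + ?g x * (real m)\<^sup>2\<bar> \<le> (real k)\<^sup>2 + (real m)\<^sup>2" for y
        using abs_inv_vnorm_le_1[of x] abs_inv_vnorm_le_1[of y]
        by (intro abs_triangle_ineq[THEN order_trans] add_mono)
           (auto simp: abs_mult intro: mult_left_le_one_le)
      show "?g (x + y) * s\<^sup>2 \<le> ?g y * (real k)\<^sup>2 + ?g x * (real m)\<^sup>2"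
        if "y \<in> set_pmf q2" for y
        using sum_sq_div_sum_le[OF supp1[OF x] supp2[OF that]]
        by (simp add: inv_vnorm_def vnorm_add s_def)
    qed
    also have "\<dots> = ?g x * (real m)\<^sup>2 + ?E q2 ?g * (real k)\<^sup>2"
      by (simp add: lin)
    finally show ?thesis .
  qed
  have "?E (add_pmf q1 q2) ?g * s\<^sup>2 = ?E q1 (\<lambda>x. ?E q2 (\<lambda>y. ?g (x + y)) * s\<^sup>2)"
    by (simp add: add_pmf_def expectation_bind_pmf[OF abs_inv_vnorm_le_1])
  also have "\<dots> \<le> ?E q1 (\<lambda>x. ?g x * (real m)\<^sup>2 + ?E q2 ?g * (real k)\<^sup>2)"
  proof (rule expectation_pmf_mono[OF _ bound inner])
    show "\<bar>?E q2 (\<lambda>y. ?g (x + y)) * s\<^sup>2\<bar> \<le> s\<^sup>2" for x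
      using abs_expectation_pmf_le[of "\<lambda>y. ?g (x + y)" 1 q2, OF abs_inv_vnorm_le_1]
      by (simp add: abs_mult mult_left_le_one_le)
  qed
  also have "\<dots> = (real m * ?E q1 ?g) * real m + (real k * ?E q2 ?g) * real k"
    by (simp add: lin power2_eq_square)
  also have "\<dots> \<le> K * s"
    using E1 E2 by (simp add: s_def distrib_left add_mono mult_right_mono)
  finally have "?E (add_pmf q1 q2) ?g * s\<^sup>2 \<le> K * s" .
  then have "real (m + k) * ?E (add_pmf q1 q2) ?g \<le> K"
    using K by (cases "s = 0") (auto simp: s_def power2_eq_square mult.commute)
  moreover have "\<forall>z\<in>set_pmf (add_pmf q1 q2). m + k \<le> vnorm z"
    using supp1 supp2 by (auto simp: add_pmf_def vnorm_add add_mono)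
  ultimately show ?thesis by (simp add: inv_moment_bounded_def)
qed

lemma inv_moment_bounded_return_0: "0 \<le> K \<Longrightarrow> inv_moment_bounded K (return_pmf 0) 0"
  by (simp add: inv_moment_bounded_def)

lemma inv_moment_bounded_iid_sum:
  assumes "0 \<le> K" "inv_moment_bounded K q 1"
  shows "inv_moment_bounded K (iid_sum q k) k"
proof (induction k)
  case 0
  show ?case using inv_moment_bounded_return_0[OF assms(1)] by simp
next
  case (Suc k)
  have "inv_moment_bounded K (add_pmf q (iid_sum q k)) (1 + k)"
    by (rule inv_moment_bounded_add_pmf[OF assms Suc])
  then show ?case by (simp add: add_pmf_def)
qed

lemma map_sum_Pi_pmf_insert:
  fixes Q :: "'b \<Rightarrow> 'a::comm_monoid_add pmf"
  assumes "finite A" "x \<notin> A"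
  shows "map_pmf (\<lambda>f. \<Sum>j\<in>insert x A. f j) (Pi_pmf (insert x A) 0 Q)
           = add_pmf (Q x) (map_pmf (\<lambda>f. \<Sum>j\<in>A. f j) (Pi_pmf A 0 Q))"
proof -
  have "(\<Sum>j\<in>insert x A. (f(x := y)) j) = y + (\<Sum>j\<in>A. f j)" for f :: "'b \<Rightarrow> 'a" and y
  proof -
    have "(\<Sum>j\<in>A. (f(x := y)) j) = (\<Sum>j\<in>A. f j)"
      using assms(2) by (intro sum.cong) auto
    then show ?thesis using assms by simp
  qed
  then show ?thesis
    unfolding Pi_pmf_insert'[OF assms] add_pmf_def
    by (simp add: map_bind_pmf map_pmf_def[symmetric] pmf.map_comp o_def)
qed

lemma inv_moment_bounded_sum_Pi_pmf:
  fixes Q :: "'b \<Rightarrow> (nat ^ 'l::finite) pmf"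
  assumes K: "0 \<le> K" and "finite A" and Q: "\<And>j. inv_moment_bounded K (Q j) (c j)"
  shows "inv_moment_bounded K (map_pmf (\<lambda>f. \<Sum>j\<in>A. f j) (Pi_pmf A 0 Q)) (\<Sum>j\<in>A. c j)"
  using \<open>finite A\<close>
proof (induction A rule: finite_induct)
  case empty
  then show ?case using inv_moment_bounded_return_0[OF K] by simp
next
  case (insert x A)
  show ?case
    unfolding map_sum_Pi_pmf_insert[OF insert.hyps]
    using inv_moment_bounded_add_pmf[OF K Q insert.IH] insert.hyps by simp
qed

lemma inv_moment_bounded_gw_step:
  assumes "0 \<le> K" "\<And>j. inv_moment_bounded K (p j) 1"
  shows "inv_moment_bounded K (gw_step p z) (vnorm z)"
  unfolding gw_step_def vnorm_def
  using assms by (intro inv_moment_bounded_sum_Pi_pmf inv_moment_bounded_iid_sum) auto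

lemma expectation_inv_vnorm_gw_step_le:
  assumes "0 \<le> K" "\<And>j. inv_moment_bounded K (p j) 1" "0 < vnorm z"
  shows "measure_pmf.expectation (gw_step p z) inv_vnorm \<le> K * inv_vnorm z"
  using inv_moment_bounded_gw_step[OF assms(1,2), where z=z] assms(3)
  by (simp add: inv_moment_bounded_def inv_vnorm_def field_simps)

lemma vnorm_gw_ge_1:
  assumes "0 \<le> K" "\<And>j. inv_moment_bounded K (p j) 1" "z \<in> set_pmf (gw p i n)"
  shows "1 \<le> vnorm z"
  using assms(3)
proof (induction n arbitrary: z)
  case 0
  then show ?case by (simp add: vnorm_axis)
next
  case (Suc n)
  then obtain y where "y \<in> set_pmf (gw p i n)" "z \<in> set_pmf (gw_step p y)"
    by auto
  with Suc.IH inv_moment_bounded_gw_step[OF assms(1,2), where z=y] show ?case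
    by (force simp: inv_moment_bounded_def)
qed

lemma expectation_inv_vnorm_gw_le:
  assumes K: "0 \<le> K" and p: "\<And>j. inv_moment_bounded K (p j) 1"
  shows "measure_pmf.expectation (gw p i n) inv_vnorm \<le> K ^ n"
proof (induction n)
  case 0
  show ?case by (simp add: inv_vnorm_def vnorm_axis)
next
  case (Suc n)
  let ?E = "measure_pmf.expectation"
  have "?E (gw p i (Suc n)) inv_vnorm = ?E (gw p i n) (\<lambda>z. ?E (gw_step p z) inv_vnorm)"
    by (simp add: expectation_bind_pmf[OF abs_inv_vnorm_le_1])
  also have "\<dots> \<le> ?E (gw p i n) (\<lambda>z. K * inv_vnorm z)"
  proof (rule expectation_pmf_mono)
    show "\<bar>?E (gw_step p z) inv_vnorm\<bar> \<le> 1" for z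
      by (rule abs_expectation_pmf_le[OF abs_inv_vnorm_le_1])
    show "\<bar>K * inv_vnorm z\<bar> \<le> K" for z
      using K abs_inv_vnorm_le_1[of z] by (simp add: abs_mult mult_left_le)
    show "?E (gw_step p z) inv_vnorm \<le> K * inv_vnorm z" if "z \<in> set_pmf (gw p i n)" for z
      using vnorm_gw_ge_1[OF K p that]
      by (intro expectation_inv_vnorm_gw_step_le[OF K p]) simp
  qed
  also have "\<dots> \<le> K * K ^ n"
    using Suc K by (simp add: mult_left_mono)
  finally show ?case by simp
qed

lemma powr_mult_less_1_of_less_neg_log:
  fixes \<rho> K \<alpha> :: real
  assumes "1 < \<rho>" "0 \<le> K" "\<alpha> < - log \<rho> K"
  shows "\<rho> powr \<alpha> * K < 1"
proof (cases "K = 0")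
  case True
  then show ?thesis by simp
next
  case False
  with assms have "\<alpha> * ln \<rho> + ln K < 0"
    by (simp add: log_def field_simps)
  then have "exp (\<alpha> * ln \<rho> + ln K) < 1" by simp
  then show ?thesis
    using assms False by (simp add: exp_add powr_def mult.commute)
qed

lemma geometric_bound_tendsto_0:
  fixes \<rho> K \<alpha> :: real and a :: "nat \<Rightarrow> real"
  assumes "1 < \<rho>" "0 \<le> K" "\<alpha> < - log \<rho> K" "\<And>n. 0 \<le> a n" "\<And>n. a n \<le> K ^ n"
  shows "(\<lambda>n. \<rho> powr (\<alpha> * real n) * a n) \<longlonglongrightarrow> 0"
proof -
  let ?c = "\<rho> powr \<alpha> * K"
  have lim: "(\<lambda>n. ?c ^ n) \<longlonglongrightarrow> 0"
    using powr_mult_less_1_of_less_neg_log[OF assms(1-3)] assms(2)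
    by (intro LIMSEQ_power_zero) simp
  have "\<rho> powr (\<alpha> * real n) * a n \<le> ?c ^ n" for n
  proof -
    have "\<rho> powr (\<alpha> * real n) * a n \<le> (\<rho> powr \<alpha>) ^ n * K ^ n"
      using assms(1,5) by (simp add: powr_powr[symmetric] powr_realpow mult_left_mono)
    then show ?thesis by (simp add: power_mult_distrib)
  qed
  then have upper: "\<forall>\<^sub>F n in sequentially. \<rho> powr (\<alpha> * real n) * a n \<le> ?c ^ n"
    by simp
  have lower: "\<forall>\<^sub>F n in sequentially. 0 \<le> \<rho> powr (\<alpha> * real n) * a n"
    using assms(4) by simp
  show ?thesis by (rule real_tendsto_sandwich[OF lower upper tendsto_const lim])
qed

theorem lemma3p2:
  fixes p :: "'l::finite \<Rightarrow> (nat ^ 'l) pmf" and \<rho> K \<alpha> :: real and i :: 'l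
  assumes l2: "CARD('l) \<ge> 2"
    and A1: "\<And>j. pmf (p j) 0 = 0" "\<And>j. (\<Sum>k\<in>UNIV. pmf (p j) (axis k 1)) < 1"
    and mean_finite: "\<And>j k. integrable (measure_pmf (p j)) (\<lambda>y. real (y $ k))"
    and A2: "positively_regular (mean_matrix p)" "largest_eigenvalue (mean_matrix p) \<rho>" "\<rho> > 1"
    and A3: "\<And>j. measure_pmf.expectation (p j) (\<lambda>y. 1 / real (vnorm y)) \<le> K"
    and K1: "K < 1"
    and alpha: "0 < \<alpha>" "\<alpha> < - log \<rho> K"
  shows "(\<lambda>n. \<rho> powr (\<alpha> * real n) * measure_pmf.expectation (gw p i n) (\<lambda>z. 1 / real (vnorm z)))
           \<longlonglongrightarrow> 0"
proof -
  \<comment> \<open>Only p(0) = 0, \<rho> > 1 and A3 are used: E(1/|Z_n|) \<le> K^n needs no regularity of M.\<close>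
  have E1: "measure_pmf.expectation (p j) inv_vnorm \<le> K" for j
    using A3[of j] by (simp add: inv_vnorm_def[abs_def])
  then have K: "0 \<le> K"
    using expectation_inv_vnorm_nonneg order_trans by blast
  have "1 \<le> vnorm y" if "y \<in> set_pmf (p j)" for y j
    using that A1(1)[of j] vnorm_eq_0_iff[of y] by (auto simp: set_pmf_iff)
  then have p: "inv_moment_bounded K (p j) 1" for j
    using E1[of j] by (simp add: inv_moment_bounded_def)
  show ?thesis
    using geometric_bound_tendsto_0[OF A2(3) K alpha(2)]
      expectation_inv_vnorm_nonneg expectation_inv_vnorm_gw_le[OF K p]
    by (simp add: inv_vnorm_def[abs_def])
qed

end
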